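(* Let $\tau_i$ be an HC task that switches to HC mode at time $t_i\le t$, and suppose $t-t_i\ge D_i$. Then $\tau_i$ generates maximal demand during $[0,t)$ when its first job is released at time $t-D_i-\lfloor (t-D_i)/T_i\rfloor\cdot T_i$ and all successive jobs are released as soon as possible (every $T_i$ time units thereafter).
   Context: A mixed-criticality sporadic task is $\tau_i=(T_i,L_i,\{C_i^L,C_i^H\},D_i)$: jobs are released with minimum separation $T_i$, $L_i\in\{LC,HC\}$, $D_i\le T_i$ is the relative deadline, and $C_i^L<C_i^H$ for HC tasks. Each task has a tightened deadline $D_i^L\le D_i$. An HC task is in LC mode until the instant $t_i$ at which some job requests to execute for more than $C_i^L$; from then on it is in HC mode. While in LC mode, a job released at $r$ must receive $C_i^L$ time units by $r+D_i^L$; once the task is in HC mode, a job may require up to $C_i^H$ units in total, to be received by its actual deadline $r+D_i$. The demand of a task during $[0,t)$ is the amount of execution that must be completed within $[0,t)$ in order to meet all of its deadlines that fall in $[0,t)$; execution with deadline after $t$ contributes no demand. "Maximal demand" is over all legal release sequences (minimum separation $T_i$) and all legal execution behaviours. *)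

theory Defs
  imports Complex_Main
begin

text \<open>Model of a single HC task with period T, tightened (LC) deadline DL, deadline D,
 budgets CL < CH, and mode-switch instant s (= t_i).  A release pattern is a set R of
 release times (possibly infinite); an execution behaviour assigns to each job
 (identified by its release time) its requested execution amount.\<close>

definition legal_releases :: "real \<Rightarrow> real set \<Rightarrow> bool" where
  "legal_releases T R \<longleftrightarrow>
     (\<forall>r\<in>R. 0 \<le> r) \<and> (\<forall>a\<in>R. \<forall>b\<in>R. a \<noteq> b \<longrightarrow> T \<le> \<bar>a - b\<bar>)"

text \<open>A job released at r whose LC deadline r + DL lies strictly before the switch
 is served completely in LC mode (budget CL, deadline r + DL); every other job is
 in HC mode from s on (budget CH, deadline r + D).\<close>

definition job_budget :: "real \<Rightarrow> real \<Rightarrow> real \<Rightarrow> real \<Rightarrow> real \<Rightarrow> real" where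
  "job_budget DL CL CH s r = (if r + DL < s then CL else CH)"

definition job_deadline :: "real \<Rightarrow> real \<Rightarrow> real \<Rightarrow> real \<Rightarrow> real" where
  "job_deadline DL D s r = (if r + DL < s then r + DL else r + D)"

definition legal_exec :: "real \<Rightarrow> real \<Rightarrow> real \<Rightarrow> real \<Rightarrow> real set \<Rightarrow> (real \<Rightarrow> real) \<Rightarrow> bool" where
  "legal_exec DL CL CH s R e \<longleftrightarrow> (\<forall>r\<in>R. 0 \<le> e r \<and> e r \<le> job_budget DL CL CH s r)"

text \<open>Demand during [0,t): execution of jobs whose (effective) deadline is at most t.
 Only jobs released no later than t can have such deadlines.\<close>

definition demand :: "real \<Rightarrow> real \<Rightarrow> real \<Rightarrow> real \<Rightarrow> real set \<Rightarrow> (real \<Rightarrow> real) \<Rightarrow> real" where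
  "demand DL D s t R e =
     (\<Sum>r\<in>{r\<in>R. r \<le> t}. if job_deadline DL D s r \<le> t then e r else 0)"

definition aligned_releases :: "real \<Rightarrow> real \<Rightarrow> real \<Rightarrow> real set" where
  "aligned_releases T D t =
     {t - D - of_int \<lfloor>(t - D) / T\<rfloor> * T + real k * T | k. True}"

end

theory Submission
  imports Defs
begin

text \<open>Every job of a legal release pattern that must complete in \<open>[0,t)\<close> is released
  no later than \<open>t - D\<close>.  Moving such a job forward to the next release of the aligned
  pattern (which ends exactly at \<open>t - D\<close>) moves it by less than \<open>T\<close>, so distinct jobs
  land on distinct aligned releases; its deadline stays within \<open>t\<close>, and its budget can
  only grow, since a later job is less likely to be served in LC mode.  Hence the
  aligned pattern with full budgets dominates the demand of every legal behaviour.\<close>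

lemma legal_releases_eq_if_dist_less:
  assumes "legal_releases T R" "a \<in> R" "b \<in> R" "\<bar>a - b\<bar> < T"
  shows "a = b"
  using assms unfolding legal_releases_def by force

lemma legal_releases_finite_le:
  fixes t :: real
  assumes "0 < T" "legal_releases T R"
  shows "finite {r\<in>R. r \<le> t}"
proof -
  let ?C = "{r\<in>R. r \<le> t}"
  let ?slot = "\<lambda>r. \<lfloor>r / T\<rfloor>"
  have "inj_on ?slot ?C"
  proof (rule inj_onI)
    fix a b assume "a \<in> ?C" "b \<in> ?C" "?slot a = ?slot b"
    then have "\<bar>a / T - b / T\<bar> < 1" by linarith
    then have "\<bar>a - b\<bar> < T" using assms(1)
      by (simp add: diff_divide_distrib[symmetric] abs_divide divide_less_eq)
    then show "a = b" using \<open>a \<in> ?C\<close> \<open>b \<in> ?C\<close> assms(2) legal_releases_eq_if_dist_less by auto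
  qed
  moreover have "?slot ` ?C \<subseteq> {0..\<lfloor>t / T\<rfloor>}"
  proof
    fix x assume "x \<in> ?slot ` ?C"
    then obtain r where r: "r \<in> R" "r \<le> t" "x = ?slot r" by auto
    have "0 \<le> r" using r assms(2) unfolding legal_releases_def by auto
    then have "0 \<le> r / T" "r / T \<le> t / T" using r assms(1) by (auto simp: divide_right_mono)
    then show "x \<in> {0..\<lfloor>t / T\<rfloor>}" using r by (auto intro: floor_mono)
  qed
  then have "finite (?slot ` ?C)" by (rule finite_subset) simp
  ultimately show ?thesis using finite_image_iff by blast
qed

lemma legal_releases_arith_progression:
  assumes "0 < T" "0 \<le> a"
  shows "legal_releases T {a + real k * T | k. True}"
  unfolding legal_releases_def
proof (intro conjI ballI impI)
  fix r assume "r \<in> {a + real k * T | k. True}"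
  then show "0 \<le> r" using assms by auto
next
  fix x y assume "x \<in> {a + real k * T | k. True}" "y \<in> {a + real k * T | k. True}" "x \<noteq> y"
  then obtain k l :: nat where kl: "x = a + real k * T" "y = a + real l * T" "k \<noteq> l" by auto
  then have "x - y = (real k - real l) * T" by (simp add: algebra_simps)
  then have "\<bar>x - y\<bar> = \<bar>real k - real l\<bar> * T" using assms(1) by (simp add: abs_mult)
  moreover have "1 \<le> \<bar>real k - real l\<bar>" using kl(3) by linarith
  ultimately show "T \<le> \<bar>x - y\<bar>" using assms(1) by simp
qed

lemma legal_releases_aligned:
  assumes "0 < T" "D \<le> t"
  shows "legal_releases T (aligned_releases T D t)"
proof -
  have "of_int \<lfloor>(t - D) / T\<rfloor> \<le> (t - D) / T" by linarith
  then have "of_int \<lfloor>(t - D) / T\<rfloor> * T \<le> t - D" using assms(1) by (simp add: le_divide_eq)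
  then show ?thesis
    unfolding aligned_releases_def by (intro legal_releases_arith_progression assms(1)) simp
qed

text \<open>The least point of the lattice \<open>x + T\<int>\<close> that is not below \<open>p\<close>.\<close>

definition align_up :: "real \<Rightarrow> real \<Rightarrow> real \<Rightarrow> real" where
  "align_up T x p = x - of_int \<lfloor>(x - p) / T\<rfloor> * T"

lemma align_up_bounds:
  assumes "0 < T"
  shows "p \<le> align_up T x p" "align_up T x p < p + T"
proof -
  let ?j = "\<lfloor>(x - p) / T\<rfloor>"
  have "of_int ?j \<le> (x - p) / T" by linarith
  then have "of_int ?j * T \<le> x - p" using assms by (metis pos_le_divide_eq)
  moreover have "(x - p) / T < of_int ?j + 1" by linarith
  then have "x - p < (of_int ?j + 1) * T" using assms by (metis pos_divide_less_eq)
  ultimately show "p \<le> align_up T x p" "align_up T x p < p + T"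
    unfolding align_up_def by (auto simp: algebra_simps)
qed

lemma align_up_le:
  assumes "0 < T" "p \<le> x"
  shows "align_up T x p \<le> x"
  using assms unfolding align_up_def by simp

lemma align_up_mem_aligned_releases:
  assumes "0 < T" "0 \<le> p" "p \<le> t - D"
  shows "align_up T (t - D) p \<in> aligned_releases T D t"
proof -
  define j where "j = \<lfloor>(t - D - p) / T\<rfloor>"
  define N where "N = \<lfloor>(t - D) / T\<rfloor>"
  have "0 \<le> j" "j \<le> N"
    unfolding j_def N_def using assms by (auto intro!: floor_mono divide_right_mono)
  then have "align_up T (t - D) p = t - D - of_int N * T + real (nat (N - j)) * T"
    unfolding align_up_def j_def[symmetric] by (simp add: algebra_simps)
  then show ?thesis unfolding aligned_releases_def N_def by blast
qed

lemma job_budget_mono: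
  assumes "CL \<le> CH" "p \<le> q"
  shows "job_budget DL CL CH s p \<le> job_budget DL CL CH s q"
  using assms unfolding job_budget_def by auto

lemma job_budget_nonneg:
  assumes "0 \<le> CL" "CL \<le> CH"
  shows "0 \<le> job_budget DL CL CH s r"
  using assms unfolding job_budget_def by auto

lemma job_deadline_le_if_release_le:
  assumes "DL \<le> D" "r \<le> t - D"
  shows "job_deadline DL D s r \<le> t"
  using assms unfolding job_deadline_def by auto

lemma release_le_if_job_deadline_le:
  assumes "0 \<le> DL" "t - s \<ge> D" "job_deadline DL D s r \<le> t"
  shows "r \<le> t - D"
  using assms unfolding job_deadline_def by (auto split: if_splits)

lemma inj_on_align_up:
  assumes "0 < T" "legal_releases T R"
  shows "inj_on (align_up T x) R"
proof (rule inj_onI)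
  fix a b assume "a \<in> R" "b \<in> R" "align_up T x a = align_up T x b"
  then have "\<bar>a - b\<bar> < T"
    using align_up_bounds[OF assms(1), where x = x and p = a]
      align_up_bounds[OF assms(1), where x = x and p = b]
    by linarith
  then show "a = b" using \<open>a \<in> R\<close> \<open>b \<in> R\<close> assms(2) legal_releases_eq_if_dist_less by blast
qed

definition due_jobs :: "real \<Rightarrow> real \<Rightarrow> real \<Rightarrow> real \<Rightarrow> real set \<Rightarrow> real set" where
  "due_jobs DL D s t R = {r\<in>R. r \<le> t \<and> job_deadline DL D s r \<le> t}"

lemma demand_eq_sum_due_jobs:
  assumes "finite {r\<in>R. r \<le> t}"
  shows "demand DL D s t R e = (\<Sum>r\<in>due_jobs DL D s t R. e r)"
  unfolding demand_def due_jobs_def using assms by (simp add: sum.inter_filter[symmetric] conj_assoc)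

lemma due_jobs_release_bounds:
  assumes "0 \<le> DL" "t - s \<ge> D" "legal_releases T R" "r \<in> due_jobs DL D s t R"
  shows "0 \<le> r" "r \<le> t - D"
  using assms release_le_if_job_deadline_le[OF assms(1,2)]
  unfolding due_jobs_def legal_releases_def by auto

lemma demand_le_aligned:
  assumes "0 < T" "0 \<le> DL" "DL \<le> D"
    and "0 \<le> CL" "CL \<le> CH" "0 \<le> s" "t - s \<ge> D"
    and legR: "legal_releases T R" and exR: "legal_exec DL CL CH s R e"
  shows "demand DL D s t R e \<le> demand DL D s t (aligned_releases T D t) (job_budget DL CL CH s)"
proof -
  define A where "A = aligned_releases T D t"
  define C where "C = due_jobs DL D s t R"
  define f where "f = align_up T (t - D)"
  let ?b = "job_budget DL CL CH s"
  let ?h = "\<lambda>r. if job_deadline DL D s r \<le> t then ?b r else 0"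
  have "0 \<le> D" using assms(2,3) by simp
  have f_bounds: "p \<le> f p" "f p \<le> t - D" "f p \<in> A" if "p \<in> C" for p
    using align_up_bounds(1)[OF assms(1)] align_up_le[OF assms(1)]
      align_up_mem_aligned_releases[OF assms(1)]
      due_jobs_release_bounds[OF assms(2,7) legR that[unfolded C_def]]
    unfolding f_def A_def by auto
  have "inj_on f C"
    using inj_on_align_up[OF assms(1) legR] unfolding f_def C_def due_jobs_def
    by (rule inj_on_subset) auto
  have "legal_releases T A"
    unfolding A_def using legal_releases_aligned assms(1,6,7) \<open>0 \<le> D\<close> by simp
  have "demand DL D s t R e = (\<Sum>r\<in>C. e r)"
    unfolding C_def using demand_eq_sum_due_jobs legal_releases_finite_le[OF assms(1) legR] .
  also have "\<dots> \<le> (\<Sum>r\<in>C. ?b r)"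
    using exR unfolding legal_exec_def C_def due_jobs_def by (intro sum_mono) auto
  also have "\<dots> \<le> (\<Sum>r\<in>C. ?b (f r))"
    using f_bounds(1) job_budget_mono[OF assms(5)] by (intro sum_mono) auto
  also have "\<dots> = (\<Sum>q\<in>f ` C. ?b q)"
    by (simp add: sum.reindex[OF \<open>inj_on f C\<close>])
  also have "\<dots> = (\<Sum>q\<in>f ` C. ?h q)"
    using f_bounds(2) job_deadline_le_if_release_le[OF assms(3)] by (intro sum.cong) auto
  also have "\<dots> \<le> (\<Sum>q\<in>{r\<in>A. r \<le> t}. ?h q)"
  proof (rule sum_mono2)
    show "finite {r\<in>A. r \<le> t}"
      using legal_releases_finite_le[OF assms(1) \<open>legal_releases T A\<close>] .
    show "f ` C \<subseteq> {r\<in>A. r \<le> t}" using f_bounds \<open>0 \<le> D\<close> by fastforce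
    show "0 \<le> ?h q" for q using job_budget_nonneg[OF assms(4,5)] by simp
  qed
  also have "\<dots> = demand DL D s t A ?b" unfolding demand_def ..
  finally show ?thesis unfolding A_def .
qed

theorem lemma3:
  fixes T D DL CL CH s t :: real
  assumes "0 < T" and "0 < DL" and "DL \<le> D" and "D \<le> T"
    and "0 < CL" and "CL < CH"
    and "0 \<le> s" and "s \<le> t" and "t - s \<ge> D"
  shows "legal_releases T (aligned_releases T D t)
       \<and> legal_exec DL CL CH s (aligned_releases T D t) (job_budget DL CL CH s)
       \<and> (\<forall>R e. legal_releases T R \<longrightarrow> legal_exec DL CL CH s R e \<longrightarrow>
             demand DL D s t R e
               \<le> demand DL D s t (aligned_releases T D t) (job_budget DL CL CH s))"
proof (intro conjI allI impI)
  show "legal_releases T (aligned_releases T D t)"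
    using legal_releases_aligned assms(1,7,9) by simp
  show "legal_exec DL CL CH s (aligned_releases T D t) (job_budget DL CL CH s)"
    unfolding legal_exec_def using job_budget_nonneg assms(5,6) by simp
  show "demand DL D s t R e \<le> demand DL D s t (aligned_releases T D t) (job_budget DL CL CH s)"
    if "legal_releases T R" "legal_exec DL CL CH s R e" for R e
    using demand_le_aligned assms(1-3,5-7,9) that by simp
qed

end
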